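(* $\mathcal{S}pl$ is not a $\Pi^{0}_{4}$ subset of $2^{2^{<\omega}}$ (identified with the Cantor space via characteristic functions).
   Context: For an infinite $A\subseteq\omega$, let $S(A)$ be the set of all $\sigma\in2^{<\omega}$ such that $\sigma$ is constant on $A\cap\mathrm{dom}(\sigma)$. The splitting ideal $\mathcal{S}pl$ is the ideal on $2^{<\omega}$ generated by the sets $S(A)$, $A\in[\omega]^{\omega}$. *)

theory Defs
  imports "HOL-Analysis.Analysis"
begin

text \<open>Finite binary sequences 2^{<omega} are represented as bool lists;
  dom(sigma) = {0..<length sigma}.\<close>

definition S :: "nat set \<Rightarrow> bool list set" where
  "S A = {\<sigma>. \<forall>i\<in>A. \<forall>j\<in>A. i < length \<sigma> \<longrightarrow> j < length \<sigma> \<longrightarrow> \<sigma> ! i = \<sigma> ! j}"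

text \<open>The splitting ideal: the ideal on 2^{<omega} generated by the sets S(A), A infinite,
  i.e. all subsets of finite unions of generators.\<close>

definition Spl :: "bool list set set" where
  "Spl = {X. \<exists>\<A>. finite \<A> \<and> (\<forall>A\<in>\<A>. infinite A) \<and> X \<subseteq> (\<Union>A\<in>\<A>. S A)}"

definition cantor_top :: "('a \<Rightarrow> bool) topology" where
  "cantor_top = product_topology (\<lambda>_. discrete_topology (UNIV :: bool set)) UNIV"

text \<open>Boldface Borel hierarchy, indexed from 1: Sigma^0_1 = open,
  Pi^0_n = complements of Sigma^0_n, Sigma^0_{n+1} = countable unions of Pi^0_n sets.\<close>

fun Sigma0 :: "nat \<Rightarrow> ('a \<Rightarrow> bool) set set" where
  "Sigma0 0 = {}"
| "Sigma0 (Suc 0) = {U. openin cantor_top U}"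
| "Sigma0 (Suc (Suc n)) =
     {\<Union>(range f) | f :: nat \<Rightarrow> ('a \<Rightarrow> bool) set. \<forall>i. f i \<in> uminus ` Sigma0 (Suc n)}"

definition Pi0 :: "nat \<Rightarrow> ('a \<Rightarrow> bool) set set" where
  "Pi0 n = uminus ` Sigma0 n"

definition char_fun :: "'a set \<Rightarrow> ('a \<Rightarrow> bool)" where
  "char_fun X = (\<lambda>x. x \<in> X)"

end

theory Submission
  imports Defs
begin

text \<open>
  Suppose \<open>char_fun ` Spl\<close> were \<open>\<Pi>\<^sup>0\<^sub>4\<close>, i.e. of the form
  \<open>\<Inter>\<^sub>i \<Union>\<^sub>j \<Inter>\<^sub>k W i j k\<close> with open \<open>W i j k\<close>; one may arrange that the
  \<open>\<Pi>\<^sup>0\<^sub>2\<close> sets \<open>\<Inter>\<^sub>k W i j k\<close> decrease in \<open>i\<close>.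

  For a relation \<open>D i j s\<close>, the set \<open>spl_reduct D\<close> contains for each \<open>D i j s\<close> a string of
  length \<open>\<langle>i,j\<rangle> + 1 + s\<close> that is \<open>0\<close> below \<open>\<langle>i,j\<rangle> + 1\<close> and beyond that is \<open>0\<close>
  exactly on the column \<open>{\<langle>i,m\<rangle> | m}\<close>. If every row \<open>i\<close> has some infinite section
  \<open>{s. D i j s}\<close>, then in a finite cover by sets \<open>S A\<close> each row has its pattern constant
  on some \<open>A\<close>, and a single \<open>A\<close> would serve infinitely many rows, which is impossible.
  If instead all sections of the rows \<open>i \<ge> i\<^sub>0\<close> are finite, the strings of these rows
  are short compared with where they start, so a fast-growing sequence meets the part of each
  string beyond its start at most once; its two alternating halves together with the first
  \<open>i\<^sub>0\<close> columns cover \<open>spl_reduct D\<close>.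

  Infinitude of a set of codes expresses a \<open>\<Pi>\<^sup>0\<^sub>2\<close> statement \<open>\<forall>k. \<exists>n. \<psi> k n\<close>.
  Each bit of \<open>spl_reduct D\<^sub>x\<close> depends on finitely many bits of a parameter
  \<open>x \<in> 2\<^sup>\<omega>\<close>, so a diagonal construction in the style of the recursion theorem yields
  \<open>y\<close> such that \<open>{s. D\<^sub>y i j s}\<close> is infinite iff
  \<open>char_fun (spl_reduct D\<^sub>y) \<in> \<Inter>\<^sub>k W i j k\<close>. Then \<open>spl_reduct D\<^sub>y \<in> Spl\<close> iff every
  row has an infinite section iff \<open>spl_reduct D\<^sub>y \<notin> Spl\<close>.
\<close>

section \<open>Finitely determined predicates on Cantor space\<close>

definition depends_below :: "nat \<Rightarrow> ((nat \<Rightarrow> bool) \<Rightarrow> bool) \<Rightarrow> bool" where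
  "depends_below N P \<longleftrightarrow> (\<forall>x x'. (\<forall>m<N. x m = x' m) \<longrightarrow> P x = P x')"

definition finitely_determined :: "((nat \<Rightarrow> bool) \<Rightarrow> bool) \<Rightarrow> bool" where
  "finitely_determined P \<longleftrightarrow> (\<exists>N. depends_below N P)"

lemma depends_below_mono:
  assumes "depends_below N P" "N \<le> N'"
  shows "depends_below N' P"
  unfolding depends_below_def
proof (intro allI impI)
  fix x x' :: "nat \<Rightarrow> bool"
  assume "\<forall>m<N'. x m = x' m"
  then have "\<forall>m<N. x m = x' m" using assms(2) by simp
  then show "P x = P x'" using assms(1) unfolding depends_below_def by blast
qed

lemma depends_below_common:
  assumes "finite K" "\<And>k. k \<in> K \<Longrightarrow> finitely_determined (P k)"
  shows "\<exists>N. \<forall>k\<in>K. depends_below N (P k)"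
  using assms
proof (induction K rule: finite_induct)
  case empty
  then show ?case by blast
next
  case (insert a K)
  then obtain N1 N2 where "\<forall>k\<in>K. depends_below N1 (P k)" "depends_below N2 (P a)"
    unfolding finitely_determined_def by blast
  then have "\<forall>k\<in>insert a K. depends_below (max N1 N2) (P k)"
    by (auto intro: depends_below_mono)
  then show ?case by blast
qed

lemma finitely_determined_const: "finitely_determined (\<lambda>x. b)"
  unfolding finitely_determined_def depends_below_def by blast

lemma finitely_determined_coordinate: "finitely_determined (\<lambda>x. x m)"
  unfolding finitely_determined_def depends_below_def by (rule exI[of _ "Suc m"]) auto

lemma finitely_determined_not: "finitely_determined P \<Longrightarrow> finitely_determined (\<lambda>x. \<not> P x)"
  unfolding finitely_determined_def depends_below_def by blast

lemma finitely_determined_ball: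
  assumes "finite K" "\<And>k. k \<in> K \<Longrightarrow> finitely_determined (P k)"
  shows "finitely_determined (\<lambda>x. \<forall>k\<in>K. P k x)"
proof -
  obtain N where N: "\<forall>k\<in>K. depends_below N (P k)"
    using depends_below_common[of K P] assms by blast
  have "depends_below N (\<lambda>x. \<forall>k\<in>K. P k x)"
    unfolding depends_below_def
  proof (intro allI impI)
    fix x x' :: "nat \<Rightarrow> bool"
    assume "\<forall>m<N. x m = x' m"
    then have "P k x = P k x'" if "k \<in> K" for k
      using N that unfolding depends_below_def by blast
    then show "(\<forall>k\<in>K. P k x) = (\<forall>k\<in>K. P k x')" by blast
  qed
  then show ?thesis unfolding finitely_determined_def by blast
qed

lemma finitely_determined_bex:
  assumes "finite K" "\<And>k. k \<in> K \<Longrightarrow> finitely_determined (P k)"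
  shows "finitely_determined (\<lambda>x. \<exists>k\<in>K. P k x)"
proof -
  have "finitely_determined (\<lambda>x. \<not> (\<forall>k\<in>K. \<not> P k x))"
    using assms by (intro finitely_determined_not finitely_determined_ball) auto
  then show ?thesis by simp
qed

lemma finitely_determined_conj:
  assumes "finitely_determined P" "finitely_determined Q"
  shows "finitely_determined (\<lambda>x. P x \<and> Q x)"
proof -
  have "finitely_determined (\<lambda>x. \<forall>R\<in>{P, Q}. R x)"
    by (rule finitely_determined_ball) (use assms in auto)
  then show ?thesis by simp
qed

definition cylinder :: "bool list \<Rightarrow> (nat \<Rightarrow> bool) set" where
  "cylinder l = {x. \<forall>m<length l. x m = l ! m}"

lemma finitely_determined_cylinder: "finitely_determined (\<lambda>x. x \<in> cylinder l)"
  unfolding finitely_determined_def depends_below_def cylinder_def by auto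

lemma self_in_cylinder: "x \<in> cylinder (map x [0..<N])"
  unfolding cylinder_def by simp

lemma cylinder_neighbourhood:
  assumes det: "\<And>a. finitely_determined (\<lambda>x. F x a)"
    and U: "openin cantor_top U" "F x \<in> U"
  shows "\<exists>l. x \<in> cylinder l \<and> F ` cylinder l \<subseteq> U"
proof -
  have "\<forall>y\<in>U. \<exists>V. finite {a \<in> UNIV. V a \<noteq> UNIV} \<and>
      (\<forall>a\<in>UNIV. openin (discrete_topology UNIV) (V a)) \<and> y \<in> Pi\<^sub>E UNIV V \<and> Pi\<^sub>E UNIV V \<subseteq> U"
    using U(1) unfolding cantor_top_def openin_product_topology_alt topspace_discrete_topology .
  then obtain V where V: "finite {a \<in> UNIV. V a \<noteq> UNIV}" "F x \<in> Pi\<^sub>E UNIV V" "Pi\<^sub>E UNIV V \<subseteq> U"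
    using U(2) by blast
  obtain N where N: "\<forall>a\<in>{a \<in> UNIV. V a \<noteq> UNIV}. depends_below N (\<lambda>x. F x a)"
    using depends_below_common[OF V(1), of "\<lambda>a x. F x a"] det by blast
  have "F x' \<in> Pi\<^sub>E UNIV V" if "x' \<in> cylinder (map x [0..<N])" for x'
  proof -
    have agree: "\<forall>m<N. x m = x' m"
      using that by (simp add: cylinder_def)
    have "F x' a \<in> V a" for a
    proof (cases "V a = UNIV")
      case False
      then have "F x a = F x' a"
        using N agree unfolding depends_below_def by blast
      then show ?thesis
        using PiE_mem[OF V(2), of a] by simp
    qed simp
    then show ?thesis by (simp add: PiE_UNIV_domain)
  qed
  then have "F ` cylinder (map x [0..<N]) \<subseteq> U"
    using V(3) by blast
  then show ?thesis
    using self_in_cylinder by blast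
qed

section \<open>A self-referential point\<close>

definition flagged :: "(nat \<Rightarrow> bool) \<Rightarrow> 'c::countable \<Rightarrow> nat \<Rightarrow> bool" where
  "flagged x c n \<longleftrightarrow> x (to_nat (c, n)) \<and> x \<in> cylinder (from_nat n)"

lemma finitely_determined_flagged: "finitely_determined (\<lambda>x. flagged x c n)"
  unfolding flagged_def
  by (intro finitely_determined_conj finitely_determined_coordinate finitely_determined_cylinder)

lemma flagged_fixed_point:
  fixes H :: "(nat \<Rightarrow> bool) \<Rightarrow> 'b" and W :: "'c::countable \<Rightarrow> 'b set"
  assumes "\<And>x c. H x \<in> W c \<Longrightarrow> \<exists>l. x \<in> cylinder l \<and> H ` cylinder l \<subseteq> W c"
  shows "\<exists>y. \<forall>c. (\<exists>n. flagged y c n) \<longleftrightarrow> H y \<in> W c"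
proof -
  \<comment> \<open>\<open>y\<close> flags \<open>(c, n)\<close> iff the cylinder coded by \<open>n\<close> is mapped into \<open>W c\<close>;
    continuity of \<open>H\<close> at \<open>y\<close> then supplies such a cylinder around \<open>y\<close>.\<close>
  define y where "y m = (case from_nat m of (c, n) \<Rightarrow> H ` cylinder (from_nat n) \<subseteq> W c)" for m
  have flagged_y: "flagged y c n \<longleftrightarrow> H ` cylinder (from_nat n) \<subseteq> W c \<and> y \<in> cylinder (from_nat n)"
    for c n
    by (simp add: flagged_def y_def)
  have "(\<exists>n. flagged y c n) \<longleftrightarrow> H y \<in> W c" for c
  proof
    assume "\<exists>n. flagged y c n"
    then show "H y \<in> W c"
      unfolding flagged_y by blast
  next
    assume "H y \<in> W c"
    then obtain l where "y \<in> cylinder l" "H ` cylinder l \<subseteq> W c"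
      using assms by blast
    then have "flagged y c (to_nat l)"
      unfolding flagged_y by simp
    then show "\<exists>n. flagged y c n" ..
  qed
  then show ?thesis
    by blast
qed

section \<open>\<open>\<forall>\<exists>\<close> statements as infinitude of a set\<close>

definition witnessed_upto :: "(nat \<Rightarrow> nat \<Rightarrow> bool) \<Rightarrow> nat \<Rightarrow> nat \<Rightarrow> bool" where
  "witnessed_upto \<psi> m t \<longleftrightarrow> (\<forall>k\<le>m. \<exists>n\<le>t. \<psi> k n)"

definition first_stage :: "(nat \<Rightarrow> nat \<Rightarrow> bool) \<Rightarrow> nat \<Rightarrow> bool" where
  "first_stage \<psi> s \<longleftrightarrow>
     (case prod_decode s of (m, t) \<Rightarrow> witnessed_upto \<psi> m t \<and> (\<forall>t'<t. \<not> witnessed_upto \<psi> m t'))"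

lemma ex_witnessed_upto_iff: "(\<exists>t. witnessed_upto \<psi> m t) \<longleftrightarrow> (\<forall>k\<le>m. \<exists>n. \<psi> k n)"
proof
  assume "\<forall>k\<le>m. \<exists>n. \<psi> k n"
  then obtain f where f: "\<And>k. k \<le> m \<Longrightarrow> \<psi> k (f k)"
    by metis
  have "witnessed_upto \<psi> m (Max (f ` {..m}))"
    unfolding witnessed_upto_def
  proof (intro allI impI)
    fix k
    assume "k \<le> m"
    then show "\<exists>n\<le>Max (f ` {..m}). \<psi> k n"
      using f by (intro exI[of _ "f k"]) auto
  qed
  then show "\<exists>t. witnessed_upto \<psi> m t" ..
qed (auto simp: witnessed_upto_def)

lemma first_stage_encode_iff:
  "first_stage \<psi> (prod_encode (m, t)) \<longleftrightarrow>
     witnessed_upto \<psi> m t \<and> t = (LEAST t. witnessed_upto \<psi> m t)"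
proof
  assume "first_stage \<psi> (prod_encode (m, t))"
  then have t: "witnessed_upto \<psi> m t" "\<And>t'. t' < t \<Longrightarrow> \<not> witnessed_upto \<psi> m t'"
    by (simp_all add: first_stage_def)
  have "(LEAST t. witnessed_upto \<psi> m t) = t"
    by (rule Least_equality) (use t in \<open>auto intro: leI\<close>)
  then show "witnessed_upto \<psi> m t \<and> t = (LEAST t. witnessed_upto \<psi> m t)"
    using t(1) by simp
next
  assume "witnessed_upto \<psi> m t \<and> t = (LEAST t. witnessed_upto \<psi> m t)"
  then show "first_stage \<psi> (prod_encode (m, t))"
    unfolding first_stage_def prod_encode_inverse using not_less_Least by auto
qed

lemma first_stage_eq_image:
  "{s. first_stage \<psi> s} =
     (\<lambda>m. prod_encode (m, LEAST t. witnessed_upto \<psi> m t)) ` {m. \<exists>t. witnessed_upto \<psi> m t}"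
proof (intro set_eqI iffI)
  fix s
  assume "s \<in> {s. first_stage \<psi> s}"
  moreover obtain m t where "s = prod_encode (m, t)"
    by (metis prod_decode_inverse surj_pair)
  ultimately show "s \<in> (\<lambda>m. prod_encode (m, LEAST t. witnessed_upto \<psi> m t)) ` {m. \<exists>t. witnessed_upto \<psi> m t}"
    using first_stage_encode_iff by auto
next
  fix s
  assume "s \<in> (\<lambda>m. prod_encode (m, LEAST t. witnessed_upto \<psi> m t)) ` {m. \<exists>t. witnessed_upto \<psi> m t}"
  then show "s \<in> {s. first_stage \<psi> s}"
    using first_stage_encode_iff by (auto intro: LeastI)
qed

lemma infinite_first_stage_iff: "infinite {s. first_stage \<psi> s} \<longleftrightarrow> (\<forall>k. \<exists>n. \<psi> k n)"
proof -
  have "inj (\<lambda>m. prod_encode (m, LEAST t. witnessed_upto \<psi> m t))"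
    by (simp add: inj_def prod_encode_eq)
  then have "infinite {s. first_stage \<psi> s} \<longleftrightarrow> infinite {m. \<forall>k\<le>m. \<exists>n. \<psi> k n}"
    unfolding first_stage_eq_image ex_witnessed_upto_iff
    by (simp add: finite_image_iff inj_on_subset)
  also have "\<dots> \<longleftrightarrow> (\<forall>k. \<exists>n. \<psi> k n)"
  proof
    assume inf: "infinite {m. \<forall>k\<le>m. \<exists>n. \<psi> k n}"
    show "\<forall>k. \<exists>n. \<psi> k n"
    proof
      fix k
      obtain m where "k < m" "\<forall>k\<le>m. \<exists>n. \<psi> k n"
        using inf unfolding infinite_nat_iff_unbounded by blast
      then show "\<exists>n. \<psi> k n" by simp
    qed
  qed simp
  finally show ?thesis .
qed

lemma finitely_determined_first_stage:
  assumes "\<And>k n. finitely_determined (\<lambda>x. \<psi> x k n)"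
  shows "finitely_determined (\<lambda>x. first_stage (\<psi> x) s)"
proof -
  obtain m t where mt: "prod_decode s = (m, t)"
    by (cases "prod_decode s")
  have witnessed: "finitely_determined (\<lambda>x. witnessed_upto (\<psi> x) m t')" for t'
  proof -
    have "finitely_determined (\<lambda>x. \<forall>k\<in>{..m}. \<exists>n\<in>{..t'}. \<psi> x k n)"
      by (intro finitely_determined_ball finitely_determined_bex assms) auto
    then show ?thesis
      unfolding witnessed_upto_def Ball_def Bex_def atMost_iff .
  qed
  have "finitely_determined
      (\<lambda>x. witnessed_upto (\<psi> x) m t \<and> (\<forall>t'\<in>{..<t}. \<not> witnessed_upto (\<psi> x) m t'))"
    by (intro finitely_determined_conj finitely_determined_ball finitely_determined_not witnessed) auto
  then show ?thesis
    unfolding first_stage_def mt Ball_def lessThan_iff by simp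
qed

section \<open>The reduction to the splitting ideal\<close>

definition column :: "nat \<Rightarrow> nat set" where
  "column i = {p. fst (prod_decode p) = i}"

definition block_start :: "nat \<Rightarrow> nat \<Rightarrow> nat" where
  "block_start i j = Suc (prod_encode (i, j))"

definition spl_pattern :: "nat \<Rightarrow> nat \<Rightarrow> nat \<Rightarrow> bool" where
  "spl_pattern i j p \<longleftrightarrow> block_start i j \<le> p \<and> p \<notin> column i"

definition spl_string :: "nat \<Rightarrow> nat \<Rightarrow> nat \<Rightarrow> bool list" where
  "spl_string i j s = map (spl_pattern i j) [0..<block_start i j + s]"

definition spl_reduct :: "(nat \<Rightarrow> nat \<Rightarrow> nat \<Rightarrow> bool) \<Rightarrow> bool list set" where
  "spl_reduct D = {spl_string i j s | i j s. D i j s}"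

lemma infinite_column: "infinite (column i)"
proof -
  have "inj (\<lambda>n. prod_encode (i, n))"
    by (simp add: inj_def prod_encode_eq)
  moreover have "range (\<lambda>n. prod_encode (i, n)) \<subseteq> column i"
    by (auto simp: column_def)
  ultimately show ?thesis
    using range_inj_infinite finite_subset by blast
qed

lemma length_spl_string [simp]: "length (spl_string i j s) = block_start i j + s"
  by (simp add: spl_string_def)

lemma nth_spl_string [simp]: "p < length (spl_string i j s) \<Longrightarrow> spl_string i j s ! p = spl_pattern i j p"
  by (simp add: spl_string_def)

lemma less_block_start: "i < block_start i j" "j < block_start i j"
  unfolding block_start_def using le_prod_encode_1 le_prod_encode_2 by (auto simp: less_Suc_eq_le)

lemma map_upt_in_S_iff: "map \<phi> [0..<n] \<in> S A \<longleftrightarrow> (\<forall>p\<in>A. \<forall>q\<in>A. p < n \<longrightarrow> q < n \<longrightarrow> \<phi> p = \<phi> q)"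
  unfolding S_def by auto

lemma in_S_if_False_on: "(\<And>p. p \<in> A \<Longrightarrow> p < length \<sigma> \<Longrightarrow> \<not> \<sigma> ! p) \<Longrightarrow> \<sigma> \<in> S A"
  unfolding S_def by auto

lemma spl_pattern_constant_if_covered:
  assumes "finite \<A>" "spl_reduct D \<subseteq> (\<Union>A\<in>\<A>. S A)" "infinite {s. D i j s}"
  shows "\<exists>A\<in>\<A>. \<forall>p\<in>A. \<forall>q\<in>A. spl_pattern i j p = spl_pattern i j q"
proof -
  have "{s. D i j s} \<subseteq> (\<Union>A\<in>\<A>. {s. spl_string i j s \<in> S A})"
    using assms(2) unfolding spl_reduct_def by blast
  then have "infinite (\<Union>A\<in>\<A>. {s. spl_string i j s \<in> S A})"
    using assms(3) by (rule infinite_super)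
  then obtain A where A: "A \<in> \<A>" "infinite {s. spl_string i j s \<in> S A}"
    using finite_UN[OF assms(1), of "\<lambda>A. {s. spl_string i j s \<in> S A}"] by blast
  have "spl_pattern i j p = spl_pattern i j q" if "p \<in> A" "q \<in> A" for p q
  proof -
    obtain s where s: "p + q < s" "spl_string i j s \<in> S A"
      using A(2) unfolding infinite_nat_iff_unbounded by blast
    then have "p < block_start i j + s" "q < block_start i j + s"
      by linarith+
    with s(2) that show ?thesis
      unfolding spl_string_def map_upt_in_S_iff by blast
  qed
  then show ?thesis
    using A(1) by blast
qed

lemma spl_pattern_nonconstant:
  assumes "infinite I" "infinite A"
  shows "\<exists>i\<in>I. \<exists>p\<in>A. \<exists>q\<in>A. spl_pattern i (j i) p \<noteq> spl_pattern i (j i) q"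
proof (rule ccontr)
  assume "\<not> ?thesis"
  then have const: "spl_pattern i (j i) p = spl_pattern i (j i) q" if "i \<in> I" "p \<in> A" "q \<in> A" for i p q
    using that by blast
  obtain p where p: "p \<in> A"
    using assms(2) by (metis finite.emptyI ex_in_conv)
  obtain i1 where i1: "i1 \<in> I" "p < i1"
    using assms(1) unfolding infinite_nat_iff_unbounded by blast
  obtain i2 where i2: "i2 \<in> I" "i1 < i2"
    using assms(1) unfolding infinite_nat_iff_unbounded by blast
  obtain q where q: "q \<in> A" "block_start i1 (j i1) + block_start i2 (j i2) < q"
    using assms(2) unfolding infinite_nat_iff_unbounded by blast
  have "q \<in> column i" if "i \<in> {i1, i2}" for i
  proof -
    have "i \<in> I" "p < block_start i (j i)"
      using that i1 i2 less_block_start(1)[where i = i and j = "j i"] by auto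
    then have "\<not> spl_pattern i (j i) p"
      unfolding spl_pattern_def by simp
    then have "\<not> spl_pattern i (j i) q"
      using const[OF \<open>i \<in> I\<close> p q(1)] by simp
    moreover have "block_start i (j i) \<le> q"
      using that q(2) by auto
    ultimately show ?thesis
      unfolding spl_pattern_def by blast
  qed
  then have "fst (prod_decode q) = i1" "fst (prod_decode q) = i2"
    by (simp_all add: column_def)
  then show False
    using i2(2) by simp
qed

lemma spl_reduct_notin_Spl:
  assumes "\<forall>i. \<exists>j. infinite {s. D i j s}"
  shows "spl_reduct D \<notin> Spl"
proof
  assume "spl_reduct D \<in> Spl"
  then obtain \<A> where \<A>: "finite \<A>" "\<forall>A\<in>\<A>. infinite A" "spl_reduct D \<subseteq> (\<Union>A\<in>\<A>. S A)"
    unfolding Spl_def by blast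
  obtain j where j: "\<And>i. infinite {s. D i (j i) s}"
    using assms by metis
  have "\<forall>i. \<exists>A. A \<in> \<A> \<and> (\<forall>p\<in>A. \<forall>q\<in>A. spl_pattern i (j i) p = spl_pattern i (j i) q)"
    using spl_pattern_constant_if_covered[OF \<A>(1,3) j] by blast
  then obtain B where B: "\<And>i. B i \<in> \<A>"
    "\<And>i p q. p \<in> B i \<Longrightarrow> q \<in> B i \<Longrightarrow> spl_pattern i (j i) p = spl_pattern i (j i) q"
    by (metis choice)
  have "finite (range B)"
    using B(1) \<A>(1) by (meson finite_subset image_subsetI)
  then obtain i0 where "infinite {i \<in> UNIV. B i = B i0}"
    using pigeonhole_infinite[of UNIV B] by blast
  moreover have "infinite (B i0)"
    using B(1) \<A>(2) by blast
  ultimately obtain i p q where "B i = B i0" "p \<in> B i0" "q \<in> B i0"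
      "spl_pattern i (j i) p \<noteq> spl_pattern i (j i) q"
    using spl_pattern_nonconstant[of "{i. B i = B i0}" "B i0" j] by auto
  then show False
    using B(2) by metis
qed

fun outpacing :: "(nat \<Rightarrow> nat) \<Rightarrow> nat \<Rightarrow> nat" where
  "outpacing M 0 = 0"
| "outpacing M (Suc t) = Suc (max (outpacing M t) (M (outpacing M t)))"

lemma strict_mono_outpacing: "strict_mono (outpacing M)"
  by (rule strict_monoI_Suc) simp

lemma strict_mono_bracket:
  fixes c :: "nat \<Rightarrow> nat"
  assumes "strict_mono c" "c 0 < a"
  shows "\<exists>t. c t < a \<and> a \<le> c (Suc t)"
proof -
  define t' where "t' = (LEAST t. a \<le> c t)"
  have "a \<le> c a"
    using strict_mono_imp_increasing[OF assms(1)] by simp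
  then have "a \<le> c t'"
    unfolding t'_def by (rule LeastI)
  moreover have "t' \<noteq> 0"
    using assms(2) \<open>a \<le> c t'\<close> by (metis not_le)
  then obtain t where t: "t' = Suc t"
    using not0_implies_Suc by blast
  moreover have "c t < a"
    using not_less_Least[of t "\<lambda>t. a \<le> c t"] t unfolding t'_def by simp
  ultimately show ?thesis
    by blast
qed

lemma in_S_alternating:
  assumes c: "strict_mono c" "c t < a"
    and \<sigma>: "\<And>p. p < length \<sigma> \<Longrightarrow> \<sigma> ! p \<Longrightarrow> a \<le> p" "length \<sigma> \<le> c (Suc (Suc t))"
  shows "\<sigma> \<in> S (range (\<lambda>u. c (2 * u + t mod 2)))"
proof (rule in_S_if_False_on)
  fix p
  assume p: "p \<in> range (\<lambda>u. c (2 * u + t mod 2))" "p < length \<sigma>"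
  then obtain u where u: "p = c (2 * u + t mod 2)"
    by blast
  have "2 * u + t mod 2 \<le> t \<or> Suc (Suc t) \<le> 2 * u + t mod 2"
    by presburger
  then show "\<not> \<sigma> ! p"
  proof
    assume "2 * u + t mod 2 \<le> t"
    then have "p < a"
      using strict_mono_leD[OF c(1)] c(2) u by (meson le_less_trans)
    then show ?thesis
      using \<sigma>(1) p(2) by (meson not_le)
  next
    assume "Suc (Suc t) \<le> 2 * u + t mod 2"
    then have "c (Suc (Suc t)) \<le> p"
      using strict_mono_leD[OF c(1)] u by blast
    then show ?thesis
      using \<sigma>(2) p(2) by linarith
  qed
qed

lemma in_S_alternating_outpacing:
  assumes "0 < a" "\<And>p. p < length \<sigma> \<Longrightarrow> \<sigma> ! p \<Longrightarrow> a \<le> p"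
    and "\<And>b. a \<le> b \<Longrightarrow> length \<sigma> \<le> M b"
  shows "\<exists>e\<in>{0, 1}. \<sigma> \<in> S (range (\<lambda>u. outpacing M (2 * u + e)))"
proof -
  obtain t where t: "outpacing M t < a" "a \<le> outpacing M (Suc t)"
    using strict_mono_bracket[OF strict_mono_outpacing] assms(1) by auto
  have "length \<sigma> \<le> M (outpacing M (Suc t))"
    using assms(3) t(2) .
  also have "\<dots> < outpacing M (Suc (Suc t))"
    by simp
  finally have "\<sigma> \<in> S (range (\<lambda>u. outpacing M (2 * u + t mod 2)))"
    using t(1) assms(2) by (intro in_S_alternating strict_mono_outpacing) auto
  moreover have "t mod 2 \<in> {0, 1}"
    by auto
  ultimately show ?thesis
    by (rule bexI[where x = "t mod 2"])
qed

lemma spl_reduct_in_Spl: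
  assumes fin: "\<And>i j. i0 \<le> i \<Longrightarrow> finite {s. D i j s}"
  shows "spl_reduct D \<in> Spl"
proof -
  \<comment> \<open>a length bound for the strings of row \<open>i\<close>, valid only for \<open>i \<ge> i\<^sub>0\<close>\<close>
  define N where "N i j = block_start i j + Max (insert 0 {s. D i j s})" for i j
  define M where "M b = Max ((\<lambda>(i, j). N i j) ` ({..b} \<times> {..b}))" for b
  define B where "B e = range (\<lambda>u. outpacing M (2 * u + e))" for e :: nat
  define \<A> where "\<A> = column ` {..<i0} \<union> B ` {0, 1}"
  have "finite \<A>"
    by (simp add: \<A>_def)
  moreover have "infinite A" if "A \<in> \<A>" for A
  proof -
    have "strict_mono (\<lambda>u. outpacing M (2 * u + e))" for e
      using strict_mono_outpacing[of M] by (simp add: strict_mono_def)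
    then have "infinite (B e)" for e
      unfolding B_def using range_inj_infinite strict_mono_imp_inj_on by blast
    then show ?thesis
      using that infinite_column unfolding \<A>_def by blast
  qed
  moreover have "\<sigma> \<in> (\<Union>A\<in>\<A>. S A)" if reduct: "\<sigma> \<in> spl_reduct D" for \<sigma>
  proof -
    obtain i j s where \<sigma>: "\<sigma> = spl_string i j s" "D i j s"
      using reduct unfolding spl_reduct_def by blast
    show ?thesis
    proof (cases "i < i0")
      case True
      have "\<sigma> \<in> S (column i)"
        by (rule in_S_if_False_on) (simp add: \<sigma> spl_pattern_def)
      then show ?thesis
        using True unfolding \<A>_def by blast
    next
      case False
      have "length \<sigma> \<le> M b" if "block_start i j \<le> b" for b
      proof -
        have "length \<sigma> \<le> N i j"
          using fin False \<sigma> by (simp add: N_def)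
        also have "\<dots> \<le> M b"
          unfolding M_def using less_block_start[where i = i and j = j] that
          by (intro Max_ge) (auto intro!: image_eqI[of _ _ "(i, j)"])
        finally show ?thesis .
      qed
      then have "\<exists>e\<in>{0, 1}. \<sigma> \<in> S (B e)"
        unfolding B_def
        by (intro in_S_alternating_outpacing) (auto simp: \<sigma> spl_pattern_def block_start_def)
      then show ?thesis
        unfolding \<A>_def by blast
    qed
  qed
  ultimately show ?thesis
    unfolding Spl_def by blast
qed

lemma spl_reduct_in_Spl_iff:
  assumes mono: "\<And>i i' j. i' \<le> i \<Longrightarrow> infinite {s. D i j s} \<Longrightarrow> infinite {s. D i' j s}"
  shows "spl_reduct D \<in> Spl \<longleftrightarrow> \<not> (\<forall>i. \<exists>j. infinite {s. D i j s})"
proof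
  assume "\<not> (\<forall>i. \<exists>j. infinite {s. D i j s})"
  then obtain i0 where "\<And>j. finite {s. D i0 j s}"
    by blast
  then have "\<And>i j. i0 \<le> i \<Longrightarrow> finite {s. D i j s}"
    using mono by blast
  then show "spl_reduct D \<in> Spl"
    by (rule spl_reduct_in_Spl)
qed (use spl_reduct_notin_Spl in blast)

lemma spl_reduct_iff_bounded:
  "\<sigma> \<in> spl_reduct D \<longleftrightarrow>
     (\<exists>i\<le>length \<sigma>. \<exists>j\<le>length \<sigma>. \<exists>s\<le>length \<sigma>. \<sigma> = spl_string i j s \<and> D i j s)"
proof
  assume "\<sigma> \<in> spl_reduct D"
  then obtain i j s where "\<sigma> = spl_string i j s" "D i j s"
    unfolding spl_reduct_def by blast
  moreover have "i \<le> length \<sigma>" "j \<le> length \<sigma>" "s \<le> length \<sigma>"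
    using less_block_start[where i = i and j = j] \<open>\<sigma> = spl_string i j s\<close> by auto
  ultimately show "\<exists>i\<le>length \<sigma>. \<exists>j\<le>length \<sigma>. \<exists>s\<le>length \<sigma>. \<sigma> = spl_string i j s \<and> D i j s"
    by blast
qed (auto simp: spl_reduct_def)

lemma finitely_determined_spl_reduct:
  assumes "\<And>i j s. finitely_determined (\<lambda>x. D x i j s)"
  shows "finitely_determined (\<lambda>x. \<sigma> \<in> spl_reduct (D x))"
proof -
  let ?L = "length \<sigma>"
  have "finitely_determined
      (\<lambda>x. \<exists>i\<in>{..?L}. \<exists>j\<in>{..?L}. \<exists>s\<in>{..?L}. \<sigma> = spl_string i j s \<and> D x i j s)"
    by (intro finitely_determined_bex finitely_determined_conj finitely_determined_const assms) auto
  then show ?thesis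
    unfolding spl_reduct_iff_bounded Bex_def atMost_iff .
qed

section \<open>A normal form for \<open>\<Pi>\<^sup>0\<^sub>4\<close> sets\<close>

lemma mem_uminus_image_iff: "X \<in> uminus ` \<X> \<longleftrightarrow> - X \<in> \<X>"
  for X :: "'a set"
  by (metis double_compl imageE imageI)

lemma mem_Sigma0_Suc_Suc:
  "X \<in> Sigma0 (Suc (Suc n)) \<longleftrightarrow> (\<exists>f :: nat \<Rightarrow> _. X = (\<Union>i. f i) \<and> (\<forall>i. f i \<in> Pi0 (Suc n)))"
  by (simp add: Pi0_def)

lemma mem_Pi0_Suc_Suc:
  "Y \<in> Pi0 (Suc (Suc n)) \<longleftrightarrow> (\<exists>g :: nat \<Rightarrow> _. Y = (\<Inter>i. g i) \<and> (\<forall>i. g i \<in> Sigma0 (Suc n)))"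
proof -
  have "Y \<in> Pi0 (Suc (Suc n)) \<longleftrightarrow> - Y \<in> Sigma0 (Suc (Suc n))"
    by (simp only: Pi0_def mem_uminus_image_iff)
  also have "\<dots> \<longleftrightarrow> (\<exists>f :: nat \<Rightarrow> _. - Y = (\<Union>i. f i) \<and> (\<forall>i. - f i \<in> Sigma0 (Suc n)))"
    by (simp only: mem_Sigma0_Suc_Suc Pi0_def mem_uminus_image_iff)
  also have "\<dots> \<longleftrightarrow> (\<exists>g :: nat \<Rightarrow> _. Y = (\<Inter>i. g i) \<and> (\<forall>i. g i \<in> Sigma0 (Suc n)))"
  proof
    assume "\<exists>f :: nat \<Rightarrow> _. - Y = (\<Union>i. f i) \<and> (\<forall>i. - f i \<in> Sigma0 (Suc n))"
    then obtain f :: "nat \<Rightarrow> _" where f: "- Y = (\<Union>i. f i)" "\<forall>i. - f i \<in> Sigma0 (Suc n)"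
      by blast
    have "Y = (\<Inter>i. - f i)"
      by (metis f(1) Compl_UN double_compl)
    with f(2) show "\<exists>g :: nat \<Rightarrow> _. Y = (\<Inter>i. g i) \<and> (\<forall>i. g i \<in> Sigma0 (Suc n))"
      by blast
  next
    assume "\<exists>g :: nat \<Rightarrow> _. Y = (\<Inter>i. g i) \<and> (\<forall>i. g i \<in> Sigma0 (Suc n))"
    then obtain g :: "nat \<Rightarrow> _" where g: "Y = (\<Inter>i. g i)" "\<forall>i. g i \<in> Sigma0 (Suc n)"
      by blast
    have "- Y = (\<Union>i. - g i)"
      by (simp add: g(1) Compl_INT)
    with g(2) show "\<exists>f :: nat \<Rightarrow> _. - Y = (\<Union>i. f i) \<and> (\<forall>i. - f i \<in> Sigma0 (Suc n))"
      by (intro exI[of _ "\<lambda>i. - g i"]) simp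
  qed
  finally show ?thesis .
qed

lemma Pi0_4_normal_form:
  assumes "Y \<in> Pi0 4"
  obtains w :: "nat \<Rightarrow> nat \<Rightarrow> nat \<Rightarrow> ('a \<Rightarrow> bool) set"
  where "\<And>i j k. openin cantor_top (w i j k)" "Y = {\<Phi>. \<forall>i. \<exists>j. \<forall>k. \<Phi> \<in> w i j k}"
proof -
  have "Y \<in> Pi0 (Suc (Suc (Suc (Suc 0))))"
    using assms by (simp add: numeral_eq_Suc)
  then obtain g :: "nat \<Rightarrow> ('a \<Rightarrow> bool) set"
    where g: "Y = (\<Inter>i. g i)" "\<And>i. g i \<in> Sigma0 (Suc (Suc (Suc 0)))"
    unfolding mem_Pi0_Suc_Suc by blast
  have "\<forall>i. \<exists>h :: nat \<Rightarrow> ('a \<Rightarrow> bool) set. g i = (\<Union>j. h j) \<and> (\<forall>j. h j \<in> Pi0 (Suc (Suc 0)))"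
    using g(2) unfolding mem_Sigma0_Suc_Suc by blast
  from choice[OF this] obtain h :: "nat \<Rightarrow> nat \<Rightarrow> ('a \<Rightarrow> bool) set"
    where "\<forall>i. g i = (\<Union>j. h i j) \<and> (\<forall>j. h i j \<in> Pi0 (Suc (Suc 0)))" ..
  then have h: "\<And>i. g i = (\<Union>j. h i j)" "\<And>i j. h i j \<in> Pi0 (Suc (Suc 0))"
    by simp_all
  have "\<forall>ij. \<exists>v :: nat \<Rightarrow> ('a \<Rightarrow> bool) set.
      h (fst ij) (snd ij) = (\<Inter>k. v k) \<and> (\<forall>k. openin cantor_top (v k))"
    using h(2) unfolding mem_Pi0_Suc_Suc by simp
  from choice[OF this] obtain v :: "nat \<times> nat \<Rightarrow> nat \<Rightarrow> ('a \<Rightarrow> bool) set"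
    where v: "\<And>i j. h i j = (\<Inter>k. v (i, j) k)" "\<And>i j k. openin cantor_top (v (i, j) k)"
    by (metis fst_conv snd_conv)
  show thesis
  proof
    show "openin cantor_top (v (i, j) k)" for i j k
      by (rule v(2))
    show "Y = {\<Phi>. \<forall>i. \<exists>j. \<forall>k. \<Phi> \<in> v (i, j) k}"
      unfolding g(1) h(1) v(1) by auto
  qed
qed

lemma Pi0_4_monotone_normal_form:
  assumes "Y \<in> Pi0 4"
  obtains w :: "nat \<Rightarrow> nat \<Rightarrow> nat \<Rightarrow> ('a \<Rightarrow> bool) set"
  where "\<And>i j k. openin cantor_top (w i j k)" "Y = {\<Phi>. \<forall>i. \<exists>j. \<forall>k. \<Phi> \<in> w i j k}"
    and "\<And>i i' j \<Phi>. i' \<le> i \<Longrightarrow> \<forall>k. \<Phi> \<in> w i j k \<Longrightarrow> \<forall>k. \<Phi> \<in> w i' j k"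
proof -
  obtain v :: "nat \<Rightarrow> nat \<Rightarrow> nat \<Rightarrow> ('a \<Rightarrow> bool) set"
    where v: "\<And>i j k. openin cantor_top (v i j k)" "Y = {\<Phi>. \<forall>i. \<exists>j. \<forall>k. \<Phi> \<in> v i j k}"
    using Pi0_4_normal_form[OF assms] by blast
  \<comment> \<open>\<open>j\<close> codes a list of witnesses for the rows up to \<open>i\<close>; beyond the length of the
    list, \<open>nth\<close> yields an unspecified but fixed number, which is harmless.\<close>
  define w where "w i j k = (\<Inter>i'\<le>i. v i' ((from_nat j :: nat list) ! i') k)" for i j k
  have all_w: "(\<forall>k. \<Phi> \<in> w i j k) \<longleftrightarrow> (\<forall>i'\<le>i. \<forall>k. \<Phi> \<in> v i' ((from_nat j :: nat list) ! i') k)"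
    for \<Phi> i j
    unfolding w_def by blast
  show thesis
  proof
    show "openin cantor_top (w i j k)" for i j k
      unfolding w_def using v(1) by (intro openin_INT2) auto
    show "\<forall>k. \<Phi> \<in> w i' j k" if "i' \<le> i" "\<forall>k. \<Phi> \<in> w i j k" for i i' j \<Phi>
      using that unfolding all_w by simp
    have "(\<forall>i. \<exists>j. \<forall>k. \<Phi> \<in> w i j k) \<longleftrightarrow> (\<forall>i. \<exists>j. \<forall>k. \<Phi> \<in> v i j k)" for \<Phi>
    proof
      assume "\<forall>i. \<exists>j. \<forall>k. \<Phi> \<in> w i j k"
      then show "\<forall>i. \<exists>j. \<forall>k. \<Phi> \<in> v i j k"
        unfolding all_w by blast
    next
      assume "\<forall>i. \<exists>j. \<forall>k. \<Phi> \<in> v i j k"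
      then obtain f where f: "\<And>i k. \<Phi> \<in> v i (f i) k"
        by metis
      have "\<forall>k. \<Phi> \<in> w i (to_nat (map f [0..<Suc i])) k" for i
        unfolding all_w using f by (simp add: nth_map_upt del: upt_Suc)
      then show "\<forall>i. \<exists>j. \<forall>k. \<Phi> \<in> w i j k"
        by blast
    qed
    then show "Y = {\<Phi>. \<forall>i. \<exists>j. \<forall>k. \<Phi> \<in> w i j k}"
      unfolding v(2) by blast
  qed
qed

section \<open>Diagonalising against a \<open>\<Pi>\<^sup>0\<^sub>4\<close> definition\<close>

lemma inj_char_fun: "inj char_fun"
  by (rule injI) (simp add: char_fun_def fun_eq_iff set_eq_iff)

lemma spl_reduct_diagonal:
  fixes w :: "nat \<Rightarrow> nat \<Rightarrow> nat \<Rightarrow> (bool list \<Rightarrow> bool) set"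
  assumes "\<And>i j k. openin cantor_top (w i j k)"
  shows "\<exists>D. \<forall>i j. infinite {s. D i j s} \<longleftrightarrow> (\<forall>k. char_fun (spl_reduct D) \<in> w i j k)"
proof -
  define D where "D x i j = first_stage (\<lambda>k. flagged x (i, j, k))" for x and i j :: nat
  define H where "H x = char_fun (spl_reduct (D x))" for x
  define W where "W c = (case c of (i, j, k) \<Rightarrow> w i j k)" for c
  have det: "finitely_determined (\<lambda>x. H x \<sigma>)" for \<sigma>
    unfolding H_def char_fun_def D_def
    by (intro finitely_determined_spl_reduct finitely_determined_first_stage finitely_determined_flagged)
  have W_open: "openin cantor_top (W c)" for c
    unfolding W_def using assms by (simp add: case_prod_beta)
  have "\<exists>l. x \<in> cylinder l \<and> H ` cylinder l \<subseteq> W c" if "H x \<in> W c" for x c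
    by (rule cylinder_neighbourhood[OF det W_open that])
  then obtain y where y: "\<And>c :: nat \<times> nat \<times> nat. (\<exists>n. flagged y c n) \<longleftrightarrow> H y \<in> W c"
    using flagged_fixed_point by blast
  have "infinite {s. D y i j s} \<longleftrightarrow> (\<forall>k. H y \<in> w i j k)" for i j
    unfolding D_def infinite_first_stage_iff y by (simp add: W_def)
  then show ?thesis
    unfolding H_def by blast
qed

theorem mainTheorem10:
  shows "char_fun ` Spl \<notin> (Pi0 4 :: (bool list \<Rightarrow> bool) set set)"
proof
  assume "char_fun ` Spl \<in> (Pi0 4 :: (bool list \<Rightarrow> bool) set set)"
  then obtain w :: "nat \<Rightarrow> nat \<Rightarrow> nat \<Rightarrow> (bool list \<Rightarrow> bool) set"
    where w_open: "\<And>i j k. openin cantor_top (w i j k)"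
    and Spl_eq: "char_fun ` Spl = {\<Phi>. \<forall>i. \<exists>j. \<forall>k. \<Phi> \<in> w i j k}"
    and w_mono: "\<And>i i' j \<Phi>. i' \<le> i \<Longrightarrow> \<forall>k. \<Phi> \<in> w i j k \<Longrightarrow> \<forall>k. \<Phi> \<in> w i' j k"
    using Pi0_4_monotone_normal_form by blast
  obtain D where D: "\<And>i j. infinite {s. D i j s} \<longleftrightarrow> (\<forall>k. char_fun (spl_reduct D) \<in> w i j k)"
    using spl_reduct_diagonal[of w] w_open by blast
  have "spl_reduct D \<in> Spl \<longleftrightarrow> char_fun (spl_reduct D) \<in> char_fun ` Spl"
    by (simp add: inj_image_mem_iff[OF inj_char_fun])
  also have "\<dots> \<longleftrightarrow> (\<forall>i. \<exists>j. infinite {s. D i j s})"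
    unfolding Spl_eq D by simp
  also have "\<dots> \<longleftrightarrow> spl_reduct D \<notin> Spl"
    using spl_reduct_in_Spl_iff[of D] w_mono unfolding D by blast
  finally show False
    by blast
qed

end
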